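(* Let $\sigma>0$, $k>0$, $\alpha\geq 0$, $\lambda\in\mathbb{R}$, and consider the linear parabolic partial differential equation for $u=u(t,x)$, $x>0$, $$u_t=\tfrac12\sigma^2x^2u_{xx}+kx(\alpha-x)u_x+\lambda x^2u .$$ Suppose $\alpha\neq0$ or $\lambda\neq\frac{k^2}{2\sigma^2}$. Then the Lie algebra of infinitesimal (point) symmetries of this equation is spanned by the two vector fields $V_1=\partial_t$ and $V_6=u\partial_u$, together with the infinite-dimensional subalgebra of vector fields $V_\varphi=\varphi(t,x)\partial_u$, where $\varphi(t,x)$ is an arbitrary solution of the equation.
   Context: An infinitesimal symmetry is a vector field $V=\tau(t,x,u)\partial_t+\xi(t,x,u)\partial_x+\phi(t,x,u)\partial_u$ generating a one-parameter group of transformations of $(t,x,u)$ that maps solutions of the equation to solutions; equivalently, the second prolongation of $V$ applied to $\tfrac12\sigma^2x^2u_{xx}+kx(\alpha-x)u_x+\lambda x^2u-u_t$ vanishes on solutions of the equation. *)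

theory Defs
  imports "HOL-Analysis.Analysis"
begin

type_synonym pt = "real \<times> real \<times> real"

definition Dom :: "pt set" where
  "Dom = {(t, x, u). x > 0}"

(* coordinate i (0 = t, 1 = x, 2 = u) of a point, and the point with coordinate i replaced by s *)
definition coord :: "nat \<Rightarrow> pt \<Rightarrow> real" where
  "coord i p = (case p of (t, x, u) \<Rightarrow> if i = 0 then t else if i = 1 then x else u)"

definition along :: "nat \<Rightarrow> pt \<Rightarrow> real \<Rightarrow> pt" where
  "along i p s = (case p of (t, x, u) \<Rightarrow>
      if i = 0 then (s, x, u) else if i = 1 then (t, s, u) else (t, x, s))"

definition pd :: "nat \<Rightarrow> (pt \<Rightarrow> real) \<Rightarrow> pt \<Rightarrow> real" where
  "pd i f p = deriv (\<lambda>s. f (along i p s)) (coord i p)"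

fun ipd :: "nat list \<Rightarrow> (pt \<Rightarrow> real) \<Rightarrow> pt \<Rightarrow> real" where
  "ipd [] f = f"
| "ipd (i # is) f = pd i (ipd is f)"

definition smooth_on :: "pt set \<Rightarrow> (pt \<Rightarrow> real) \<Rightarrow> bool" where
  "smooth_on S f \<longleftrightarrow>
     (\<forall>is. set is \<subseteq> {0, 1, 2} \<longrightarrow>
        continuous_on S (ipd is f) \<and>
        (\<forall>p\<in>S. \<forall>i<3. (\<lambda>s. ipd is f (along i p s)) differentiable (at (coord i p))))"

definition Delta :: "real \<Rightarrow> real \<Rightarrow> real \<Rightarrow> real \<Rightarrow> real
      \<Rightarrow> real \<Rightarrow> real \<Rightarrow> real \<Rightarrow> real \<Rightarrow> real" where
  "Delta \<sigma> k \<alpha> lam x u ut ux uxx =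
     1/2 * \<sigma>^2 * x^2 * uxx + k * x * (\<alpha> - x) * ux + lam * x^2 * u - ut"

(* Prolongation coefficients phi^t, phi^x, phi^xx (Olver's formulas) of
   V = tau d_t + xi d_x + phi d_u, at the point p with jet coordinates ut, ux, uxx, uxt. *)
definition phi_t :: "(pt \<Rightarrow> real) \<Rightarrow> (pt \<Rightarrow> real) \<Rightarrow> (pt \<Rightarrow> real) \<Rightarrow> pt
      \<Rightarrow> real \<Rightarrow> real \<Rightarrow> real" where
  "phi_t \<tau> \<xi> \<phi> p ut ux =
     pd 0 \<phi> p - pd 0 \<xi> p * ux + (pd 2 \<phi> p - pd 0 \<tau> p) * ut
     - pd 2 \<xi> p * ux * ut - pd 2 \<tau> p * ut^2"

definition phi_x :: "(pt \<Rightarrow> real) \<Rightarrow> (pt \<Rightarrow> real) \<Rightarrow> (pt \<Rightarrow> real) \<Rightarrow> pt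
      \<Rightarrow> real \<Rightarrow> real \<Rightarrow> real" where
  "phi_x \<tau> \<xi> \<phi> p ut ux =
     pd 1 \<phi> p + (pd 2 \<phi> p - pd 1 \<xi> p) * ux - pd 1 \<tau> p * ut
     - pd 2 \<xi> p * ux^2 - pd 2 \<tau> p * ux * ut"

definition phi_xx :: "(pt \<Rightarrow> real) \<Rightarrow> (pt \<Rightarrow> real) \<Rightarrow> (pt \<Rightarrow> real) \<Rightarrow> pt
      \<Rightarrow> real \<Rightarrow> real \<Rightarrow> real \<Rightarrow> real \<Rightarrow> real" where
  "phi_xx \<tau> \<xi> \<phi> p ut ux uxx uxt =
     ipd [1,1] \<phi> p + (2 * ipd [1,2] \<phi> p - ipd [1,1] \<xi> p) * ux - ipd [1,1] \<tau> p * ut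
     + (ipd [2,2] \<phi> p - 2 * ipd [1,2] \<xi> p) * ux^2 - 2 * ipd [1,2] \<tau> p * ux * ut
     - ipd [2,2] \<xi> p * ux^3 - ipd [2,2] \<tau> p * ux^2 * ut
     + (pd 2 \<phi> p - 2 * pd 1 \<xi> p) * uxx - 2 * pd 1 \<tau> p * uxt
     - 3 * pd 2 \<xi> p * ux * uxx - pd 2 \<tau> p * ut * uxx - 2 * pd 2 \<tau> p * ux * uxt"

(* pr^(2) V applied to Delta (Delta has no explicit t-dependence) *)
definition prV_Delta :: "real \<Rightarrow> real \<Rightarrow> real \<Rightarrow> real \<Rightarrow>
      (pt \<Rightarrow> real) \<Rightarrow> (pt \<Rightarrow> real) \<Rightarrow> (pt \<Rightarrow> real) \<Rightarrow> pt
      \<Rightarrow> real \<Rightarrow> real \<Rightarrow> real \<Rightarrow> real \<Rightarrow> real" where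
  "prV_Delta \<sigma> k \<alpha> lam \<tau> \<xi> \<phi> p ut ux uxx uxt =
     (case p of (t, x, u) \<Rightarrow>
        \<xi> p * (\<sigma>^2 * x * uxx + k * (\<alpha> - 2 * x) * ux + 2 * lam * x * u)
      + \<phi> p * (lam * x^2)
      + phi_t \<tau> \<xi> \<phi> p ut ux * (-1)
      + phi_x \<tau> \<xi> \<phi> p ut ux * (k * x * (\<alpha> - x))
      + phi_xx \<tau> \<xi> \<phi> p ut ux uxx uxt * (1/2 * \<sigma>^2 * x^2))"

definition is_inf_symmetry :: "real \<Rightarrow> real \<Rightarrow> real \<Rightarrow> real \<Rightarrow>
      (pt \<Rightarrow> real) \<Rightarrow> (pt \<Rightarrow> real) \<Rightarrow> (pt \<Rightarrow> real) \<Rightarrow> bool" where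
  "is_inf_symmetry \<sigma> k \<alpha> lam \<tau> \<xi> \<phi> \<longleftrightarrow>
     (\<forall>t x u ut ux uxx uxt. x > 0 \<longrightarrow>
        Delta \<sigma> k \<alpha> lam x u ut ux uxx = 0 \<longrightarrow>
        prV_Delta \<sigma> k \<alpha> lam \<tau> \<xi> \<phi> (t, x, u) ut ux uxx uxt = 0)"

definition is_solution :: "real \<Rightarrow> real \<Rightarrow> real \<Rightarrow> real \<Rightarrow> (real \<Rightarrow> real \<Rightarrow> real) \<Rightarrow> bool" where
  "is_solution \<sigma> k \<alpha> lam w \<longleftrightarrow>
     (let W = (\<lambda>(t, x, u). w t x) in
      smooth_on Dom W \<and>
      (\<forall>t x u. x > 0 \<longrightarrow>
         Delta \<sigma> k \<alpha> lam x (W (t,x,u)) (pd 0 W (t,x,u)) (pd 1 W (t,x,u)) (ipd [1,1] W (t,x,u)) = 0))"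

end

(* After substituting u_t from the equation, the symmetry condition is a polynomial identity in
   the free jet coordinates u_x, u_xx, u_xt. Its coefficients force tau = tau(t), xi = xi(t,x) and
   phi = b(t,x) + a(t,x) u, where b solves the equation, and the Euler equation
   x xi_x = xi + tau' x / 2, whence xi = x (tau' ln x / 2 + xi_1(t)). A further coefficient
   gives a_x explicitly, so a is known up to a function of t, and the remaining equation for a
   becomes an identity in x^2 ln x, x^2, x ln x, x, (ln x)^2, ln x, 1 on x > 0. Comparing growth as
   x -> infinity yields tau' (lam - k^2/(2 sigma^2)) = 0, (2 lam - k^2/sigma^2) (xi_1 + tau'/2) = 0,
   alpha tau' = 0 and alpha (xi_1 + tau') = 0. Outside the excluded case tau' = xi_1 = 0, so
   xi = 0 and then a is constant. *)

theory Submission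
  imports Defs "HOL-Real_Asymp.Real_Asymp"
begin

section \<open>Partial derivatives on the half-space\<close>

lemma along_coord_simps [simp]:
  "along 0 (t,x,u) s = (s,x,u)" "along 1 (t,x,u) s = (t,s,u)" "along 2 (t,x,u) s = (t,x,s)"
  "coord 0 (t,x,u) = t" "coord 1 (t,x,u) = x" "coord 2 (t,x,u) = u"
  "along (Suc 0) (t,x,u) s = (t,s,u)" "coord (Suc 0) (t,x,u) = x"
  by (simp_all add: along_def coord_def)

lemma mem_Dom_iff [simp]: "(t,x,u) \<in> Dom \<longleftrightarrow> 0 < x"
  by (simp add: Dom_def)

lemma ball_DomI: "(\<And>t x u. 0 < x \<Longrightarrow> P (t,x,u)) \<Longrightarrow> \<forall>q\<in>Dom. P q"
  by (auto simp: Dom_def)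

lemma pd_cong_Dom:
  assumes "\<forall>q\<in>Dom. f q = g q" "p \<in> Dom"
  shows "pd i f p = pd i g p"
proof -
  obtain t x u where p: "p = (t,x,u)" by (cases p)
  with assms(2) have x: "0 < x" by simp
  have "eventually (\<lambda>s. f (along i p s) = g (along i p s)) (nhds (coord i p))"
  proof (cases "i = 1")
    case True
    have "eventually (\<lambda>s. s \<in> {0<..}) (nhds x)"
      using x by (intro eventually_nhds_in_open) auto
    then show ?thesis using True p assms(1) by (auto elim!: eventually_mono)
  next
    case False
    then show ?thesis using p assms(1) x by (auto simp: along_def)
  qed
  then show ?thesis unfolding pd_def by (rule deriv_cong_ev[OF _ refl])
qed

lemma pd_eq_0_if_const_on_Dom:
  assumes "\<forall>q\<in>Dom. f q = c" "p \<in> Dom"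
  shows "pd i f p = 0"
  using pd_cong_Dom[OF assms] by (simp add: pd_def)

lemma smooth_on_has_pd:
  assumes "smooth_on Dom g" "p \<in> Dom" "i < 3" "set ds \<subseteq> {0,1,2}"
  shows "((\<lambda>s. ipd ds g (along i p s)) has_real_derivative ipd (i # ds) g p) (at (coord i p))"
proof -
  have "(\<lambda>s. ipd ds g (along i p s)) differentiable (at (coord i p))"
    using assms unfolding smooth_on_def by blast
  then show ?thesis by (simp add: pd_def DERIV_deriv_iff_real_differentiable[symmetric])
qed

lemma smooth_on_has_pd_t:
  "smooth_on Dom g \<Longrightarrow> 0 < x \<Longrightarrow> set ds \<subseteq> {0,1,2} \<Longrightarrow>
    ((\<lambda>s. ipd ds g (s,x,u)) has_real_derivative ipd (0 # ds) g (t,x,u)) (at t)"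
  using smooth_on_has_pd[of g "(t,x,u)" 0 ds] by simp

lemma smooth_on_has_pd_x:
  "smooth_on Dom g \<Longrightarrow> 0 < x \<Longrightarrow> set ds \<subseteq> {0,1,2} \<Longrightarrow>
    ((\<lambda>s. ipd ds g (t,s,u)) has_real_derivative ipd (1 # ds) g (t,x,u)) (at x)"
  using smooth_on_has_pd[of g "(t,x,u)" 1 ds] by simp

lemma smooth_on_has_pd_u:
  "smooth_on Dom g \<Longrightarrow> 0 < x \<Longrightarrow> set ds \<subseteq> {0,1,2} \<Longrightarrow>
    ((\<lambda>s. ipd ds g (t,x,s)) has_real_derivative ipd (2 # ds) g (t,x,u)) (at u)"
  using smooth_on_has_pd[of g "(t,x,u)" 2 ds] by simp

lemma ipd_restrict_u_0:
  assumes "set ds \<subseteq> {0,1,2}"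
  shows "ipd ds (\<lambda>(t,x,u). g (t,x,0)) (t,x,u) = (if 2 \<in> set ds then 0 else ipd ds g (t,x,0))"
  using assms
proof (induction ds arbitrary: t x u)
  case Nil
  then show ?case by simp
next
  case (Cons i ds)
  have IH: "ipd ds (\<lambda>(t,x,u). g (t,x,0))
      = (\<lambda>(t,x,u). if 2 \<in> set ds then 0 else ipd ds g (t,x,0))"
    using Cons by auto
  have "i = 0 \<or> i = 1 \<or> i = 2" using Cons.prems by auto
  then show ?case by (cases "2 \<in> set ds") (auto simp: IH pd_def)
qed

lemma smooth_on_restrict_u_0:
  assumes "smooth_on Dom g"
  shows "smooth_on Dom (\<lambda>(t,x,u). g (t,x,0))"
  unfolding smooth_on_def
proof (intro allI impI conjI ballI)
  fix ds :: "nat list" assume ds: "set ds \<subseteq> {0,1,2}"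
  have ipd_eq: "ipd ds (\<lambda>(t,x,u). g (t,x,0))
      = (\<lambda>q. if 2 \<in> set ds then 0 else ipd ds g (fst q, fst (snd q), 0))"
    using ipd_restrict_u_0[OF ds] by auto
  have "continuous_on Dom (ipd ds g)" using assms ds unfolding smooth_on_def by blast
  then have "continuous_on Dom (\<lambda>q. ipd ds g (fst q, fst (snd q), 0))"
    by (rule continuous_on_compose2)
      (auto simp: Dom_def intro!: continuous_on_Pair continuous_on_fst continuous_on_snd continuous_on_id)
  then show "continuous_on Dom (ipd ds (\<lambda>(t,x,u). g (t,x,0)))"
    unfolding ipd_eq by (cases "2 \<in> set ds") auto
  fix p i assume p: "p \<in> Dom" and i: "i < (3::nat)"
  obtain t x u where p_eq: "p = (t,x,u)" by (cases p)
  with p have "0 < x" by simp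
  then have "(\<lambda>s. ipd ds g (along j (t,x,0) s)) differentiable (at (coord j (t,x,0)))"
    if "j < 3" for j
    using assms ds that unfolding smooth_on_def by simp
  from this[of 0] this[of 1] i
  show "(\<lambda>s. ipd ds (\<lambda>(t,x,u). g (t,x,0)) (along i p s)) differentiable (at (coord i p))"
    unfolding ipd_eq p_eq by (cases "2 \<in> set ds") (auto simp: along_def coord_def less_Suc_eq)
qed

lemma DERIV_unique_on_pos:
  assumes "(F has_real_derivative D) (at x)" "(G has_real_derivative E) (at x)" "0 < x"
    and "\<And>y. 0 < y \<Longrightarrow> F y = G y"
  shows "D = E"
proof -
  have "(G has_real_derivative D) (at x)"
    using assms by (intro has_field_derivative_transform_within_open[OF assms(1), of "{0<..}"]) auto
  then show ?thesis using assms(2) by (rule DERIV_unique)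
qed

lemma DERIV_zero_on_pos_imp_const:
  fixes F :: "real \<Rightarrow> real"
  assumes "\<And>y. 0 < y \<Longrightarrow> (F has_real_derivative 0) (at y)" "0 < x" "0 < y"
  shows "F x = F y"
proof -
  obtain c where "\<forall>z\<in>{0<..}. F z = c"
    using has_field_derivative_zero_constant[of "{0<..}" F] assms(1)
    by (metis convex_real_interval(3) greaterThan_iff has_field_derivative_at_within)
  then show ?thesis using assms by auto
qed

lemma euler_ode_solution:
  fixes F D :: "real \<Rightarrow> real"
  assumes "\<And>y. 0 < y \<Longrightarrow> (F has_real_derivative D y) (at y)"
    and "\<And>y. 0 < y \<Longrightarrow> y * D y = F y + c * y" and "0 < x"
  shows "F x = x * (c * ln x + F 1)"
proof -
  have "F x / x - c * ln x = F 1 / 1 - c * ln 1"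
  proof (rule DERIV_zero_on_pos_imp_const[where F = "\<lambda>y. F y / y - c * ln y"])
    fix y :: real assume y: "0 < y"
    have "((\<lambda>y. F y / y - c * ln y) has_real_derivative (D y * y - F y) / (y * y) - c / y) (at y)"
      using y assms(1)[OF y] by (auto intro!: derivative_eq_intros)
    moreover have "(D y * y - F y) / (y * y) - c / y = 0"
      using y assms(2)[OF y] by (simp add: field_simps)
    ultimately show "((\<lambda>y. F y / y - c * ln y) has_real_derivative 0) (at y)" by simp
  qed (use assms in auto)
  then show ?thesis using assms(3) by (simp add: field_simps)
qed

lemma tendsto_eventually_0_imp_0:
  fixes f :: "real \<Rightarrow> real"
  assumes "(f \<longlongrightarrow> c) at_top" "eventually (\<lambda>x. f x = 0) at_top"
  shows "c = 0"
  using tendsto_cong[OF assms(2)] assms(1) by (simp add: tendsto_const_iff)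

lemma log_poly_eq_0_imp_leading_coeffs_0:
  fixes c1 c2 c3 c4 c5 c6 c7 :: real
  assumes "\<And>x. 0 < x \<Longrightarrow>
    c1*x^2*ln x + c2*x^2 + c3*x*ln x + c4*x + c5*(ln x)^2 + c6*ln x + c7 = 0"
  shows "c1 = 0" "c2 = 0" "c3 = 0" "c4 = 0"
proof -
  have ev: "eventually (\<lambda>x. c1*x^2*ln x + c2*x^2 + c3*x*ln x + c4*x + c5*(ln x)^2 + c6*ln x + c7 = 0) at_top"
    using eventually_gt_at_top[of 0] by eventually_elim (rule assms)
  show c1: "c1 = 0"
  proof (rule tendsto_eventually_0_imp_0)
    show "((\<lambda>x. (c1*x^2*ln x + c2*x^2 + c3*x*ln x + c4*x + c5*(ln x)^2 + c6*ln x + c7) / (x^2 * ln x)) \<longlongrightarrow> c1) at_top"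
      by real_asymp
  qed (use ev in \<open>eventually_elim, simp\<close>)
  show c2: "c2 = 0"
  proof (rule tendsto_eventually_0_imp_0)
    show "((\<lambda>x. (c2*x^2 + c3*x*ln x + c4*x + c5*(ln x)^2 + c6*ln x + c7) / x^2) \<longlongrightarrow> c2) at_top"
      by real_asymp
  qed (use ev in \<open>eventually_elim, simp add: c1\<close>)
  show c3: "c3 = 0"
  proof (rule tendsto_eventually_0_imp_0)
    show "((\<lambda>x. (c3*x*ln x + c4*x + c5*(ln x)^2 + c6*ln x + c7) / (x * ln x)) \<longlongrightarrow> c3) at_top"
      by real_asymp
  qed (use ev in \<open>eventually_elim, simp add: c1 c2\<close>)
  show "c4 = 0"
  proof (rule tendsto_eventually_0_imp_0)
    show "((\<lambda>x. (c4*x + c5*(ln x)^2 + c6*ln x + c7) / x) \<longlongrightarrow> c4) at_top"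
      by real_asymp
  qed (use ev in \<open>eventually_elim, simp add: c1 c2 c3\<close>)
qed

section \<open>Determining equations\<close>

text \<open>Each coefficient is extracted by evaluating the symmetry condition at a few points of
  \<open>(u\<^sub>x, u\<^sub>x\<^sub>x, u\<^sub>x\<^sub>t)\<close> and taking a finite difference.\<close>

lemma inf_symmetry_on_solutions:
  assumes "is_inf_symmetry \<sigma> k \<alpha> lam \<tau> \<xi> \<phi>" "0 < x"
  shows "prV_Delta \<sigma> k \<alpha> lam \<tau> \<xi> \<phi> (t,x,u)
     (1/2 * \<sigma>^2 * x^2 * uxx + k * x * (\<alpha> - x) * ux + lam * x^2 * u) ux uxx uxt = 0"
  using assms unfolding is_inf_symmetry_def Delta_def by auto

lemma inf_symmetry_pd_tau:
  assumes "is_inf_symmetry \<sigma> k \<alpha> lam \<tau> \<xi> \<phi>" "0 < x" "0 < \<sigma>"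
  shows "pd 1 \<tau> (t,x,u) = 0" "pd 2 \<tau> (t,x,u) = 0"
proof -
  let ?S = "\<lambda>ux uxx uxt. prV_Delta \<sigma> k \<alpha> lam \<tau> \<xi> \<phi> (t,x,u)
     (1/2 * \<sigma>^2 * x^2 * uxx + k * x * (\<alpha> - x) * ux + lam * x^2 * u) ux uxx uxt"
  have S: "?S a b c = 0" for a b c using inf_symmetry_on_solutions[OF assms(1,2)] .
  have "?S 0 0 1 - ?S 0 0 0 = -(\<sigma>^2 * x^2 * pd 1 \<tau> (t,x,u))"
    by (simp add: prV_Delta_def phi_t_def phi_x_def phi_xx_def algebra_simps)
  then show x: "pd 1 \<tau> (t,x,u) = 0"
    using S[where a=0 and b=0 and c=1] S[where a=0 and b=0 and c=0] assms by simp
  have "?S 1 0 1 - ?S 1 0 0 = -(\<sigma>^2 * x^2 * (pd 1 \<tau> (t,x,u) + pd 2 \<tau> (t,x,u)))"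
    by (simp add: prV_Delta_def phi_t_def phi_x_def phi_xx_def algebra_simps)
  then show "pd 2 \<tau> (t,x,u) = 0"
    using S[where a=1 and b=0 and c=1] S[where a=1 and b=0 and c=0] assms x by simp
qed

lemma inf_symmetry_pd_xi:
  assumes "is_inf_symmetry \<sigma> k \<alpha> lam \<tau> \<xi> \<phi>" "0 < x" "0 < \<sigma>"
    and "pd 1 \<tau> (t,x,u) = 0" "pd 2 \<tau> (t,x,u) = 0"
      "ipd [1,1] \<tau> (t,x,u) = 0" "ipd [1,2] \<tau> (t,x,u) = 0" "ipd [2,2] \<tau> (t,x,u) = 0"
  shows "pd 2 \<xi> (t,x,u) = 0"
proof -
  let ?S = "\<lambda>ux uxx uxt. prV_Delta \<sigma> k \<alpha> lam \<tau> \<xi> \<phi> (t,x,u)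
     (1/2 * \<sigma>^2 * x^2 * uxx + k * x * (\<alpha> - x) * ux + lam * x^2 * u) ux uxx uxt"
  have S: "?S a b c = 0" for a b c using inf_symmetry_on_solutions[OF assms(1,2)] .
  have "?S 1 1 0 - ?S 1 0 0 - ?S 0 1 0 + ?S 0 0 0 = -(\<sigma>^2 * x^2 * pd 2 \<xi> (t,x,u))"
    using assms(4-) by (simp add: prV_Delta_def phi_t_def phi_x_def phi_xx_def algebra_simps)
  then show ?thesis
    using S[where a=1 and b=1 and c=0] S[where a=1 and b=0 and c=0]
      S[where a=0 and b=1 and c=0] S[where a=0 and b=0 and c=0] assms
    by simp
qed

lemma inf_symmetry_determining_eqs:
  assumes "is_inf_symmetry \<sigma> k \<alpha> lam \<tau> \<xi> \<phi>" "0 < x" "0 < \<sigma>"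
    and \<tau>: "pd 1 \<tau> (t,x,u) = 0" "pd 2 \<tau> (t,x,u) = 0"
      "ipd [1,1] \<tau> (t,x,u) = 0" "ipd [1,2] \<tau> (t,x,u) = 0" "ipd [2,2] \<tau> (t,x,u) = 0"
    and \<xi>: "pd 2 \<xi> (t,x,u) = 0" "ipd [1,2] \<xi> (t,x,u) = 0" "ipd [2,2] \<xi> (t,x,u) = 0"
  shows "ipd [2,2] \<phi> (t,x,u) = 0"
    and "\<xi> (t,x,u) - x * pd 1 \<xi> (t,x,u) + x * pd 0 \<tau> (t,x,u) / 2 = 0"
    and "\<xi> (t,x,u) * k * (\<alpha> - 2*x) + pd 0 \<xi> (t,x,u) + pd 0 \<tau> (t,x,u) * k*x*(\<alpha>-x)
          - pd 1 \<xi> (t,x,u) * k*x*(\<alpha>-x)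
          + \<sigma>^2*x^2/2 * (2 * ipd [1,2] \<phi> (t,x,u) - ipd [1,1] \<xi> (t,x,u)) = 0"
    and "2*lam*x*u*\<xi> (t,x,u) + \<phi> (t,x,u)*lam*x^2 - pd 0 \<phi> (t,x,u)
          - (pd 2 \<phi> (t,x,u) - pd 0 \<tau> (t,x,u))*lam*x^2*u + k*x*(\<alpha>-x)*pd 1 \<phi> (t,x,u)
          + \<sigma>^2*x^2/2 * ipd [1,1] \<phi> (t,x,u) = 0"
proof -
  let ?S = "\<lambda>ux uxx uxt. prV_Delta \<sigma> k \<alpha> lam \<tau> \<xi> \<phi> (t,x,u)
     (1/2 * \<sigma>^2 * x^2 * uxx + k * x * (\<alpha> - x) * ux + lam * x^2 * u) ux uxx uxt"
  have S: "?S a b c = 0" for a b c using inf_symmetry_on_solutions[OF assms(1,2)] .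
  have "?S 1 0 0 + ?S (-1) 0 0 - 2 * ?S 0 0 0 = \<sigma>^2 * x^2 * ipd [2,2] \<phi> (t,x,u)"
    using \<tau> \<xi> by (simp add: prV_Delta_def phi_t_def phi_x_def phi_xx_def algebra_simps)
  then show "ipd [2,2] \<phi> (t,x,u) = 0"
    using S[where a=1 and b=0 and c=0] S[where a="-1" and b=0 and c=0] S[where a=0 and b=0 and c=0]
      assms
    by simp
  have "?S 0 1 0 - ?S 0 0 0
      = \<sigma>^2 * x * (\<xi> (t,x,u) - x * pd 1 \<xi> (t,x,u) + x * pd 0 \<tau> (t,x,u) / 2)"
    using \<tau> \<xi> by (simp add: prV_Delta_def phi_t_def phi_x_def phi_xx_def algebra_simps power2_eq_square)
  then show "\<xi> (t,x,u) - x * pd 1 \<xi> (t,x,u) + x * pd 0 \<tau> (t,x,u) / 2 = 0"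
    using S[where a=0 and b=1 and c=0] S[where a=0 and b=0 and c=0] assms by simp
  have "?S 1 0 0 - ?S (-1) 0 0
      = 2 * (\<xi> (t,x,u) * k * (\<alpha> - 2*x) + pd 0 \<xi> (t,x,u) + pd 0 \<tau> (t,x,u) * k*x*(\<alpha>-x)
          - pd 1 \<xi> (t,x,u) * k*x*(\<alpha>-x)
          + \<sigma>^2*x^2/2 * (2 * ipd [1,2] \<phi> (t,x,u) - ipd [1,1] \<xi> (t,x,u)))"
    using \<tau> \<xi> by (simp add: prV_Delta_def phi_t_def phi_x_def phi_xx_def algebra_simps power2_eq_square)
  then show "\<xi> (t,x,u) * k * (\<alpha> - 2*x) + pd 0 \<xi> (t,x,u) + pd 0 \<tau> (t,x,u) * k*x*(\<alpha>-x)
          - pd 1 \<xi> (t,x,u) * k*x*(\<alpha>-x)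
          + \<sigma>^2*x^2/2 * (2 * ipd [1,2] \<phi> (t,x,u) - ipd [1,1] \<xi> (t,x,u)) = 0"
    using S[where a=1 and b=0 and c=0] S[where a="-1" and b=0 and c=0] by simp
  have "?S 0 0 0 = 2*lam*x*u*\<xi> (t,x,u) + \<phi> (t,x,u)*lam*x^2 - pd 0 \<phi> (t,x,u)
          - (pd 2 \<phi> (t,x,u) - pd 0 \<tau> (t,x,u))*lam*x^2*u + k*x*(\<alpha>-x)*pd 1 \<phi> (t,x,u)
          + \<sigma>^2*x^2/2 * ipd [1,1] \<phi> (t,x,u)"
    using \<tau> \<xi> by (simp add: prV_Delta_def phi_t_def phi_x_def phi_xx_def algebra_simps power2_eq_square)
  then show "2*lam*x*u*\<xi> (t,x,u) + \<phi> (t,x,u)*lam*x^2 - pd 0 \<phi> (t,x,u)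
          - (pd 2 \<phi> (t,x,u) - pd 0 \<tau> (t,x,u))*lam*x^2*u + k*x*(\<alpha>-x)*pd 1 \<phi> (t,x,u)
          + \<sigma>^2*x^2/2 * ipd [1,1] \<phi> (t,x,u) = 0"
    using S[where a=0 and b=0 and c=0] by simp
qed

section \<open>Integration of the determining equations\<close>

locale smooth_inf_symmetry =
  fixes \<sigma> k \<alpha> lam :: real and \<tau> \<xi> \<phi> :: "pt \<Rightarrow> real"
  assumes sigma_pos: "0 < \<sigma>"
    and smooth_tau: "smooth_on Dom \<tau>" and smooth_xi: "smooth_on Dom \<xi>"
    and smooth_phi: "smooth_on Dom \<phi>"
    and inf_symmetry: "is_inf_symmetry \<sigma> k \<alpha> lam \<tau> \<xi> \<phi>"
begin

lemma tau_derivs_eq_0: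
  assumes "0 < x"
  shows "pd 1 \<tau> (t,x,u) = 0" "pd 2 \<tau> (t,x,u) = 0"
    "ipd [1,1] \<tau> (t,x,u) = 0" "ipd [1,2] \<tau> (t,x,u) = 0" "ipd [2,2] \<tau> (t,x,u) = 0"
proof -
  have "\<forall>q\<in>Dom. pd 1 \<tau> q = 0" "\<forall>q\<in>Dom. pd 2 \<tau> q = 0"
    by (intro ball_DomI inf_symmetry_pd_tau[OF inf_symmetry _ sigma_pos], assumption)+
  then show "pd 1 \<tau> (t,x,u) = 0" "pd 2 \<tau> (t,x,u) = 0"
    "ipd [1,1] \<tau> (t,x,u) = 0" "ipd [1,2] \<tau> (t,x,u) = 0" "ipd [2,2] \<tau> (t,x,u) = 0"
    using assms pd_eq_0_if_const_on_Dom by auto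
qed

lemma xi_derivs_eq_0:
  assumes "0 < x"
  shows "pd 2 \<xi> (t,x,u) = 0" "ipd [1,2] \<xi> (t,x,u) = 0" "ipd [2,2] \<xi> (t,x,u) = 0"
proof -
  have "\<forall>q\<in>Dom. pd 2 \<xi> q = 0"
    by (intro ball_DomI inf_symmetry_pd_xi[OF inf_symmetry _ sigma_pos] tau_derivs_eq_0)
  then show "pd 2 \<xi> (t,x,u) = 0" "ipd [1,2] \<xi> (t,x,u) = 0" "ipd [2,2] \<xi> (t,x,u) = 0"
    using assms pd_eq_0_if_const_on_Dom by auto
qed

context
  fixes x :: real assumes x_pos: "0 < x"
begin

lemmas determining_eqs = inf_symmetry_determining_eqs
  [OF inf_symmetry x_pos sigma_pos tau_derivs_eq_0[OF x_pos] xi_derivs_eq_0[OF x_pos]]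

end

text \<open>Once \<open>\<tau>\<close> is shown to depend on \<open>t\<close> only, \<open>\<tau>'\<close>, \<open>\<tau>''\<close>, \<open>\<tau>'''\<close> are its
  derivatives; \<open>\<xi>\<^sub>1\<close> is the integration constant of the Euler equation for \<open>\<xi>\<close>.\<close>

definition \<tau>' :: "real \<Rightarrow> real" where "\<tau>' t = pd 0 \<tau> (t,1,0)"
definition \<tau>'' :: "real \<Rightarrow> real" where "\<tau>'' t = pd 0 (pd 0 \<tau>) (t,1,0)"
definition \<tau>''' :: "real \<Rightarrow> real" where "\<tau>''' t = pd 0 (pd 0 (pd 0 \<tau>)) (t,1,0)"
definition \<xi>\<^sub>1 :: "real \<Rightarrow> real" where "\<xi>\<^sub>1 t = \<xi> (t,1,0)"
definition \<xi>\<^sub>1' :: "real \<Rightarrow> real" where "\<xi>\<^sub>1' t = pd 0 \<xi> (t,1,0)"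
definition \<xi>\<^sub>1'' :: "real \<Rightarrow> real" where "\<xi>\<^sub>1'' t = pd 0 (pd 0 \<xi>) (t,1,0)"

lemma tau_eq:
  assumes "0 < x"
  shows "\<tau> (t,x,u) = \<tau> (t,1,0)"
proof -
  have "\<tau> (t,x,u) = \<tau> (t,1,u)"
  proof (rule DERIV_zero_on_pos_imp_const[where F = "\<lambda>y. \<tau> (t,y,u)"])
    fix y :: real assume "0 < y"
    then show "((\<lambda>y. \<tau> (t,y,u)) has_real_derivative 0) (at y)"
      using smooth_on_has_pd_x[OF smooth_tau, where ds = "[]" and t = t and u = u] tau_derivs_eq_0
      by simp
  qed (use assms in auto)
  also have "\<dots> = \<tau> (t,1,0)"
  proof (rule DERIV_isconst_all[where f = "\<lambda>v. \<tau> (t,1,v)", rule_format])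
    fix v :: real
    show "((\<lambda>v. \<tau> (t,1,v)) has_real_derivative 0) (at v)"
      using smooth_on_has_pd_u[OF smooth_tau, where x = 1 and ds = "[]" and t = t and u = v]
        tau_derivs_eq_0
      by simp
  qed
  finally show ?thesis .
qed

lemma tau_t_eq:
  assumes "0 < x"
  shows "pd 0 \<tau> (t,x,u) = pd 0 \<tau> (t,1,0)"
proof -
  have "(\<lambda>s. \<tau> (s,x,u)) = (\<lambda>s. \<tau> (s,1,0))" using tau_eq[OF assms] by auto
  then show ?thesis by (simp add: pd_def)
qed

lemma xi_eq:
  assumes "0 < x"
  shows "\<xi> (t,x,u) = \<xi> (t,x,0)"
proof (rule DERIV_isconst_all[where f = "\<lambda>v. \<xi> (t,x,v)", rule_format])
  fix v :: real
  show "((\<lambda>v. \<xi> (t,x,v)) has_real_derivative 0) (at v)"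
    using smooth_on_has_pd_u[OF smooth_xi assms, where ds = "[]" and t = t and u = v]
      xi_derivs_eq_0[OF assms]
    by simp
qed

lemma phi_u_eq:
  assumes "0 < x"
  shows "pd 2 \<phi> (t,x,u) = pd 2 \<phi> (t,x,0)"
proof (rule DERIV_isconst_all[where f = "\<lambda>v. pd 2 \<phi> (t,x,v)", rule_format])
  fix v :: real
  show "((\<lambda>v. pd 2 \<phi> (t,x,v)) has_real_derivative 0) (at v)"
    using smooth_on_has_pd_u[OF smooth_phi assms, where ds = "[2]" and t = t and u = v]
      determining_eqs(1)[OF assms]
    by simp
qed

lemma phi_affine:
  assumes "0 < x"
  shows "\<phi> (t,x,u) = \<phi> (t,x,0) + u * pd 2 \<phi> (t,x,0)"
proof -
  have "\<phi> (t,x,u) - u * pd 2 \<phi> (t,x,0) = \<phi> (t,x,0) - 0 * pd 2 \<phi> (t,x,0)"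
  proof (rule DERIV_isconst_all[where f = "\<lambda>v. \<phi> (t,x,v) - v * pd 2 \<phi> (t,x,0)", rule_format])
    fix v :: real
    show "((\<lambda>v. \<phi> (t,x,v) - v * pd 2 \<phi> (t,x,0)) has_real_derivative 0) (at v)"
      using smooth_on_has_pd_u[OF smooth_phi assms, where ds = "[]" and t = t and u = v]
        phi_u_eq[OF assms]
      by (auto intro!: derivative_eq_intros)
  qed
  then show ?thesis by simp
qed

lemma phi_derivs_affine:
  assumes "0 < x"
  shows "pd 0 \<phi> (t,x,1) = pd 0 \<phi> (t,x,0) + pd 0 (pd 2 \<phi>) (t,x,0)"
    and "pd 1 \<phi> (t,x,1) = pd 1 \<phi> (t,x,0) + pd 1 (pd 2 \<phi>) (t,x,0)"
    and "ipd [1,1] \<phi> (t,x,1) = ipd [1,1] \<phi> (t,x,0) + ipd [1,1] (pd 2 \<phi>) (t,x,0)"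
proof -
  have "(\<lambda>s. \<phi> (s,x,1)) = (\<lambda>s. \<phi> (s,x,0) + pd 2 \<phi> (s,x,0))"
    using phi_affine[OF assms, where u = 1] by simp
  then have "((\<lambda>s. \<phi> (s,x,1)) has_real_derivative
      pd 0 \<phi> (t,x,0) + pd 0 (pd 2 \<phi>) (t,x,0)) (at t)"
    using smooth_on_has_pd_t[OF smooth_phi assms, where ds = "[]" and u = 0 and t = t]
      smooth_on_has_pd_t[OF smooth_phi assms, where ds = "[2]" and u = 0 and t = t]
    by (auto intro!: derivative_eq_intros)
  then show "pd 0 \<phi> (t,x,1) = pd 0 \<phi> (t,x,0) + pd 0 (pd 2 \<phi>) (t,x,0)"
    using smooth_on_has_pd_t[OF smooth_phi assms, where ds = "[]" and u = 1 and t = t]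
    by (auto intro: DERIV_unique)
  have x_deriv: "pd 1 \<phi> (t,y,1) = pd 1 \<phi> (t,y,0) + pd 1 (pd 2 \<phi>) (t,y,0)" if y: "0 < y" for y
  proof (rule DERIV_unique_on_pos[where F = "\<lambda>s. \<phi> (t,s,1)" and G = "\<lambda>s. \<phi> (t,s,0) + pd 2 \<phi> (t,s,0)"])
    show "((\<lambda>s. \<phi> (t,s,1)) has_real_derivative pd 1 \<phi> (t,y,1)) (at y)"
      using smooth_on_has_pd_x[OF smooth_phi y, where ds = "[]" and u = 1 and t = t] by simp
    show "((\<lambda>s. \<phi> (t,s,0) + pd 2 \<phi> (t,s,0)) has_real_derivative
        pd 1 \<phi> (t,y,0) + pd 1 (pd 2 \<phi>) (t,y,0)) (at y)"
      using smooth_on_has_pd_x[OF smooth_phi y, where ds = "[]" and u = 0 and t = t]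
        smooth_on_has_pd_x[OF smooth_phi y, where ds = "[2]" and u = 0 and t = t]
      by (auto intro!: derivative_eq_intros)
  qed (use y phi_affine[where u = 1] in simp_all)
  then show "pd 1 \<phi> (t,x,1) = pd 1 \<phi> (t,x,0) + pd 1 (pd 2 \<phi>) (t,x,0)"
    using assms .
  show "ipd [1,1] \<phi> (t,x,1) = ipd [1,1] \<phi> (t,x,0) + ipd [1,1] (pd 2 \<phi>) (t,x,0)"
  proof (rule DERIV_unique_on_pos[where F = "\<lambda>s. pd 1 \<phi> (t,s,1)"
        and G = "\<lambda>s. pd 1 \<phi> (t,s,0) + pd 1 (pd 2 \<phi>) (t,s,0)"])
    show "((\<lambda>s. pd 1 \<phi> (t,s,1)) has_real_derivative ipd [1,1] \<phi> (t,x,1)) (at x)"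
      using smooth_on_has_pd_x[OF smooth_phi assms, where ds = "[1]" and u = 1 and t = t] by simp
    show "((\<lambda>s. pd 1 \<phi> (t,s,0) + pd 1 (pd 2 \<phi>) (t,s,0)) has_real_derivative
        ipd [1,1] \<phi> (t,x,0) + ipd [1,1] (pd 2 \<phi>) (t,x,0)) (at x)"
      using smooth_on_has_pd_x[OF smooth_phi assms, where ds = "[1]" and u = 0 and t = t]
        smooth_on_has_pd_x[OF smooth_phi assms, where ds = "[1,2]" and u = 0 and t = t]
      by (auto intro!: derivative_eq_intros)
  qed (use assms x_deriv in auto)
qed

lemma phi_0_solves:
  assumes "0 < x"
  shows "\<phi> (t,x,0) * lam * x^2 - pd 0 \<phi> (t,x,0) + k*x*(\<alpha>-x) * pd 1 \<phi> (t,x,0)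
    + \<sigma>^2*x^2/2 * ipd [1,1] \<phi> (t,x,0) = 0"
  using determining_eqs(4)[OF assms, where t = t and u = 0] by simp

lemma phi_0_is_solution: "is_solution \<sigma> k \<alpha> lam (\<lambda>t x. \<phi> (t,x,0))"
  unfolding is_solution_def Let_def
proof (intro conjI allI impI)
  show "smooth_on Dom (\<lambda>(t,x,u). \<phi> (t,x,0))"
    by (rule smooth_on_restrict_u_0[OF smooth_phi])
  fix t x u :: real assume x: "0 < x"
  show "Delta \<sigma> k \<alpha> lam x ((\<lambda>(t,x,u). \<phi> (t,x,0)) (t,x,u))
      (pd 0 (\<lambda>(t,x,u). \<phi> (t,x,0)) (t,x,u)) (pd 1 (\<lambda>(t,x,u). \<phi> (t,x,0)) (t,x,u))
      (ipd [1,1] (\<lambda>(t,x,u). \<phi> (t,x,0)) (t,x,u)) = 0"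
    using phi_0_solves[OF x, of t] ipd_restrict_u_0[of "[0]" \<phi> t x u]
      ipd_restrict_u_0[of "[1]" \<phi> t x u] ipd_restrict_u_0[of "[1,1]" \<phi> t x u]
    by (simp add: Delta_def algebra_simps)
qed

text \<open>Evaluating the last determining equation at \<open>u = 1\<close> and \<open>u = 0\<close>, instead of
  differentiating it in \<open>u\<close>, avoids exchanging mixed partial derivatives.\<close>

lemma phi_u_solves:
  assumes "0 < x"
  shows "2*lam*x * \<xi> (t,x,0) + lam*x^2 * \<tau>' t - pd 0 (pd 2 \<phi>) (t,x,0)
    + k*x*(\<alpha>-x) * pd 1 (pd 2 \<phi>) (t,x,0) + \<sigma>^2*x^2/2 * ipd [1,1] (pd 2 \<phi>) (t,x,0) = 0"
proof -
  let ?E = "\<lambda>u. 2*lam*x*u*\<xi> (t,x,u) + \<phi> (t,x,u)*lam*x^2 - pd 0 \<phi> (t,x,u)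
    - (pd 2 \<phi> (t,x,u) - pd 0 \<tau> (t,x,u))*lam*x^2*u + k*x*(\<alpha>-x)*pd 1 \<phi> (t,x,u)
    + \<sigma>^2*x^2/2 * ipd [1,1] \<phi> (t,x,u)"
  have "2*lam*x * \<xi> (t,x,0) + lam*x^2 * \<tau>' t - pd 0 (pd 2 \<phi>) (t,x,0)
    + k*x*(\<alpha>-x) * pd 1 (pd 2 \<phi>) (t,x,0) + \<sigma>^2*x^2/2 * ipd [1,1] (pd 2 \<phi>) (t,x,0)
    = ?E 1 - ?E 0"
    using xi_eq[OF assms, of t 1] phi_affine[OF assms, of t 1] phi_u_eq[OF assms, of t 1]
      tau_t_eq[OF assms, of t 1] phi_derivs_affine[OF assms, of t]
    by (simp add: \<tau>'_def algebra_simps)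
  also have "\<dots> = 0"
    using determining_eqs(4)[OF assms, where t = t and u = 1]
      determining_eqs(4)[OF assms, where t = t and u = 0]
    by simp
  finally show ?thesis .
qed

lemma xi_euler_eq:
  assumes "0 < x"
  shows "x * pd 1 \<xi> (t,x,0) = \<xi> (t,x,0) + \<tau>' t / 2 * x"
  using determining_eqs(2)[OF assms, where t = t and u = 0] tau_t_eq[OF assms, of t 0]
  by (simp add: \<tau>'_def algebra_simps)

lemma phi_ux_eq:
  assumes "0 < x"
  shows "\<sigma>^2*x^2 * pd 1 (pd 2 \<phi>) (t,x,0) = \<sigma>^2*x^2/2 * ipd [1,1] \<xi> (t,x,0)
    - \<xi> (t,x,0) * k * (\<alpha> - 2*x) - pd 0 \<xi> (t,x,0) - \<tau>' t * k*x*(\<alpha>-x)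
    + pd 1 \<xi> (t,x,0) * k*x*(\<alpha>-x)"
  using determining_eqs(3)[OF assms, where t = t and u = 0] tau_t_eq[OF assms, of t 0]
  by (simp add: \<tau>'_def algebra_simps)

lemma DERIV_coeffs:
  "(\<tau>' has_real_derivative \<tau>'' t) (at t)" "(\<tau>'' has_real_derivative \<tau>''' t) (at t)"
  "(\<xi>\<^sub>1 has_real_derivative \<xi>\<^sub>1' t) (at t)" "(\<xi>\<^sub>1' has_real_derivative \<xi>\<^sub>1'' t) (at t)"
  using smooth_on_has_pd_t[OF smooth_tau, where x = 1 and u = 0 and t = t and ds = "[0]"]
    smooth_on_has_pd_t[OF smooth_tau, where x = 1 and u = 0 and t = t and ds = "[0,0]"]
    smooth_on_has_pd_t[OF smooth_xi, where x = 1 and u = 0 and t = t and ds = "[]"]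
    smooth_on_has_pd_t[OF smooth_xi, where x = 1 and u = 0 and t = t and ds = "[0]"]
  unfolding \<tau>'_def[abs_def] \<tau>''_def[abs_def] \<tau>'''_def[abs_def]
    \<xi>\<^sub>1_def[abs_def] \<xi>\<^sub>1'_def[abs_def] \<xi>\<^sub>1''_def[abs_def]
  by simp_all

lemma xi_explicit:
  assumes "0 < x"
  shows "\<xi> (t,x,0) = x * (\<tau>' t * ln x / 2 + \<xi>\<^sub>1 t)"
proof -
  have "\<xi> (t,x,0) = x * (\<tau>' t / 2 * ln x + \<xi> (t,1,0))"
  proof (rule euler_ode_solution[where F = "\<lambda>y. \<xi> (t,y,0)" and D = "\<lambda>y. pd 1 \<xi> (t,y,0)"])
    show "((\<lambda>y. \<xi> (t,y,0)) has_real_derivative pd 1 \<xi> (t,y,0)) (at y)" if "0 < y" for y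
      using smooth_on_has_pd_x[OF smooth_xi that, where ds = "[]" and t = t and u = 0] by simp
    show "y * pd 1 \<xi> (t,y,0) = \<xi> (t,y,0) + \<tau>' t / 2 * y" if "0 < y" for y
      using xi_euler_eq[OF that] .
  qed (rule assms)
  then show ?thesis by (simp add: \<xi>\<^sub>1_def algebra_simps)
qed

lemma xi_x_explicit:
  assumes "0 < x"
  shows "pd 1 \<xi> (t,x,0) = \<tau>' t * ln x / 2 + \<xi>\<^sub>1 t + \<tau>' t / 2"
proof -
  have "x * pd 1 \<xi> (t,x,0) = x * (\<tau>' t * ln x / 2 + \<xi>\<^sub>1 t + \<tau>' t / 2)"
    using xi_euler_eq[OF assms, of t] xi_explicit[OF assms, of t] by (simp add: algebra_simps)
  then show ?thesis using assms by simp
qed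

lemma xi_xx_explicit:
  assumes "0 < x"
  shows "ipd [1,1] \<xi> (t,x,0) = \<tau>' t / (2 * x)"
proof (rule DERIV_unique_on_pos[where F = "\<lambda>y. pd 1 \<xi> (t,y,0)"
      and G = "\<lambda>y. \<tau>' t * ln y / 2 + \<xi>\<^sub>1 t + \<tau>' t / 2"])
  show "((\<lambda>y. pd 1 \<xi> (t,y,0)) has_real_derivative ipd [1,1] \<xi> (t,x,0)) (at x)"
    using smooth_on_has_pd_x[OF smooth_xi assms, where ds = "[1]" and t = t and u = 0] by simp
  show "((\<lambda>y. \<tau>' t * ln y / 2 + \<xi>\<^sub>1 t + \<tau>' t / 2) has_real_derivative \<tau>' t / (2 * x)) (at x)"
    using assms by (auto intro!: derivative_eq_intros)
qed (use assms xi_x_explicit in auto)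

lemma xi_t_explicit:
  assumes "0 < x"
  shows "pd 0 \<xi> (t,x,0) = x * (\<tau>'' t * ln x / 2 + \<xi>\<^sub>1' t)"
proof (rule DERIV_unique)
  show "((\<lambda>s. \<xi> (s,x,0)) has_real_derivative pd 0 \<xi> (t,x,0)) (at t)"
    using smooth_on_has_pd_t[OF smooth_xi assms, where ds = "[]" and t = t and u = 0] by simp
  have "(\<lambda>s. \<xi> (s,x,0)) = (\<lambda>s. x * (\<tau>' s * ln x / 2 + \<xi>\<^sub>1 s))"
    using xi_explicit[OF assms] by simp
  then show "((\<lambda>s. \<xi> (s,x,0)) has_real_derivative x * (\<tau>'' t * ln x / 2 + \<xi>\<^sub>1' t)) (at t)"
    by (auto intro!: derivative_eq_intros DERIV_coeffs)
qed

text \<open>With \<open>(p, f, q, g) = (\<tau>', \<xi>\<^sub>1, \<tau>'', \<xi>\<^sub>1')\<close> this is an \<open>x\<close>-primitive of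
  \<open>\<phi>\<^sub>u\<^sub>x\<close>; it is linear in \<open>(p, f, q, g)\<close>, so its \<open>t\<close>-derivative is again of this form.\<close>

definition phi_u_prim :: "real \<Rightarrow> real \<Rightarrow> real \<Rightarrow> real \<Rightarrow> real \<Rightarrow> real" where
  "phi_u_prim p f q g x = k/\<sigma>^2 * (p*x*ln x/2 + f*x)
     + ((\<sigma>^2*p/4 - k*\<alpha>*p/2 - g) * ln x - q * (ln x)^2/4) / \<sigma>^2"

lemma DERIV_phi_u_prim_x:
  assumes "0 < x"
  shows "((\<lambda>y. phi_u_prim p f q g y) has_real_derivative
    k/\<sigma>^2 * (p*ln x/2 + f + p/2) + (\<sigma>^2*p/4 - k*\<alpha>*p/2 - g - q*ln x/2) / (\<sigma>^2*x)) (at x)"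
  unfolding phi_u_prim_def using assms sigma_pos
  by (auto intro!: derivative_eq_intros simp: field_simps power2_eq_square)

lemma DERIV_phi_u_prim_t:
  assumes "(p has_real_derivative p') (at t)" "(f has_real_derivative f') (at t)"
    and "(q has_real_derivative q') (at t)" "(g has_real_derivative g') (at t)"
  shows "((\<lambda>s. phi_u_prim (p s) (f s) (q s) (g s) x) has_real_derivative
    phi_u_prim p' f' q' g' x) (at t)"
  unfolding phi_u_prim_def using sigma_pos
  by (auto intro!: derivative_eq_intros assms simp: field_simps power2_eq_square)

lemma phi_ux_explicit:
  assumes "0 < x"
  shows "pd 1 (pd 2 \<phi>) (t,x,0) = k/\<sigma>^2 * (\<tau>' t*ln x/2 + \<xi>\<^sub>1 t + \<tau>' t/2)
    + (\<sigma>^2*\<tau>' t/4 - k*\<alpha>*\<tau>' t/2 - \<xi>\<^sub>1' t - \<tau>'' t*ln x/2) / (\<sigma>^2*x)"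
proof -
  have "\<sigma>^2*x^2 * pd 1 (pd 2 \<phi>) (t,x,0) = \<sigma>^2*x^2 * (k/\<sigma>^2 * (\<tau>' t*ln x/2 + \<xi>\<^sub>1 t + \<tau>' t/2)
    + (\<sigma>^2*\<tau>' t/4 - k*\<alpha>*\<tau>' t/2 - \<xi>\<^sub>1' t - \<tau>'' t*ln x/2) / (\<sigma>^2*x))"
    unfolding phi_ux_eq[OF assms] xi_explicit[OF assms] xi_x_explicit[OF assms]
      xi_xx_explicit[OF assms] xi_t_explicit[OF assms]
    using assms sigma_pos by (simp add: field_simps power2_eq_square)
  then show ?thesis using assms sigma_pos by simp
qed

lemma phi_uxx_explicit:
  assumes "0 < x"
  shows "ipd [1,1] (pd 2 \<phi>) (t,x,0) = k*\<tau>' t / (2*\<sigma>^2*x)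
    + (\<tau>'' t*ln x/2 - \<tau>'' t/2 - (\<sigma>^2*\<tau>' t/4 - k*\<alpha>*\<tau>' t/2 - \<xi>\<^sub>1' t)) / (\<sigma>^2*x^2)"
proof (rule DERIV_unique_on_pos[OF _ _ assms])
  show "((\<lambda>y. pd 1 (pd 2 \<phi>) (t,y,0)) has_real_derivative ipd [1,1] (pd 2 \<phi>) (t,x,0)) (at x)"
    using smooth_on_has_pd_x[OF smooth_phi assms, where ds = "[1,2]" and t = t and u = 0] by simp
  show "((\<lambda>y. k/\<sigma>^2 * (\<tau>' t*ln y/2 + \<xi>\<^sub>1 t + \<tau>' t/2)
      + (\<sigma>^2*\<tau>' t/4 - k*\<alpha>*\<tau>' t/2 - \<xi>\<^sub>1' t - \<tau>'' t*ln y/2) / (\<sigma>^2*y)) has_real_derivative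
    k*\<tau>' t / (2*\<sigma>^2*x)
      + (\<tau>'' t*ln x/2 - \<tau>'' t/2 - (\<sigma>^2*\<tau>' t/4 - k*\<alpha>*\<tau>' t/2 - \<xi>\<^sub>1' t)) / (\<sigma>^2*x^2)) (at x)"
    using assms sigma_pos
    by (auto intro!: derivative_eq_intros simp: field_simps power2_eq_square)
qed (rule phi_ux_explicit)

lemma phi_u_explicit:
  assumes "0 < x"
  shows "pd 2 \<phi> (t,x,0) = phi_u_prim (\<tau>' t) (\<xi>\<^sub>1 t) (\<tau>'' t) (\<xi>\<^sub>1' t) x
    + (pd 2 \<phi> (t,1,0) - phi_u_prim (\<tau>' t) (\<xi>\<^sub>1 t) (\<tau>'' t) (\<xi>\<^sub>1' t) 1)"
proof -
  let ?F = "\<lambda>y. pd 2 \<phi> (t,y,0) - phi_u_prim (\<tau>' t) (\<xi>\<^sub>1 t) (\<tau>'' t) (\<xi>\<^sub>1' t) y"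
  have "?F x = ?F 1"
  proof (rule DERIV_zero_on_pos_imp_const[where F = ?F])
    fix y :: real assume y: "0 < y"
    have "(?F has_real_derivative pd 1 (pd 2 \<phi>) (t,y,0) - pd 1 (pd 2 \<phi>) (t,y,0)) (at y)"
      using smooth_on_has_pd_x[OF smooth_phi y, where ds = "[2]" and t = t and u = 0]
        DERIV_phi_u_prim_x[OF y] phi_ux_explicit[OF y]
      by (auto intro!: derivative_eq_intros)
    then show "(?F has_real_derivative 0) (at y)" by simp
  qed (use assms in auto)
  then show ?thesis by simp
qed

lemma phi_ut_explicit:
  assumes "0 < x"
  shows "pd 0 (pd 2 \<phi>) (t,x,0) = phi_u_prim (\<tau>'' t) (\<xi>\<^sub>1' t) (\<tau>''' t) (\<xi>\<^sub>1'' t) x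
    + (pd 0 (pd 2 \<phi>) (t,1,0) - phi_u_prim (\<tau>'' t) (\<xi>\<^sub>1' t) (\<tau>''' t) (\<xi>\<^sub>1'' t) 1)"
proof (rule DERIV_unique)
  show "((\<lambda>s. pd 2 \<phi> (s,x,0)) has_real_derivative pd 0 (pd 2 \<phi>) (t,x,0)) (at t)"
    using smooth_on_has_pd_t[OF smooth_phi assms, where ds = "[2]" and t = t and u = 0] by simp
  have "(\<lambda>s. pd 2 \<phi> (s,x,0)) = (\<lambda>s. phi_u_prim (\<tau>' s) (\<xi>\<^sub>1 s) (\<tau>'' s) (\<xi>\<^sub>1' s) x
    + (pd 2 \<phi> (s,1,0) - phi_u_prim (\<tau>' s) (\<xi>\<^sub>1 s) (\<tau>'' s) (\<xi>\<^sub>1' s) 1))"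
    using phi_u_explicit[OF assms] by simp
  moreover have "((\<lambda>s. pd 2 \<phi> (s,1,0)) has_real_derivative pd 0 (pd 2 \<phi>) (t,1,0)) (at t)"
    using smooth_on_has_pd_t[where x = 1 and ds = "[2]" and t = t and u = 0] smooth_phi by simp
  ultimately show "((\<lambda>s. pd 2 \<phi> (s,x,0)) has_real_derivative
    phi_u_prim (\<tau>'' t) (\<xi>\<^sub>1' t) (\<tau>''' t) (\<xi>\<^sub>1'' t) x
    + (pd 0 (pd 2 \<phi>) (t,1,0) - phi_u_prim (\<tau>'' t) (\<xi>\<^sub>1' t) (\<tau>''' t) (\<xi>\<^sub>1'' t) 1)) (at t)"
    by (auto intro!: derivative_eq_intros DERIV_phi_u_prim_t DERIV_coeffs)
qed

lemma phi_u_solves_log_poly: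
  "\<exists>c5 c6 c7. \<forall>x>0.
     \<tau>' t * (lam - k^2/(2*\<sigma>^2)) * x^2 * ln x + (2*lam - k^2/\<sigma>^2) * (\<xi>\<^sub>1 t + \<tau>' t/2) * x^2
     + \<alpha>*k^2*\<tau>' t/(2*\<sigma>^2) * x * ln x + k^2*\<alpha>*(\<xi>\<^sub>1 t + \<tau>' t)/\<sigma>^2 * x
     + c5 * (ln x)^2 + c6 * ln x + c7 = 0"
proof (intro exI allI impI)
  define \<gamma> where "\<gamma> = \<sigma>^2*\<tau>' t/4 - k*\<alpha>*\<tau>' t/2 - \<xi>\<^sub>1' t"
  define \<gamma>' where "\<gamma>' = \<sigma>^2*\<tau>'' t/4 - k*\<alpha>*\<tau>'' t/2 - \<xi>\<^sub>1'' t"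
  define K where "K = pd 0 (pd 2 \<phi>) (t,1,0) - phi_u_prim (\<tau>'' t) (\<xi>\<^sub>1' t) (\<tau>''' t) (\<xi>\<^sub>1'' t) 1"
  fix x :: real assume x: "0 < x"
  have "2*lam*x * \<xi> (t,x,0) + lam*x^2 * \<tau>' t - pd 0 (pd 2 \<phi>) (t,x,0)
    + k*x*(\<alpha>-x) * pd 1 (pd 2 \<phi>) (t,x,0) + \<sigma>^2*x^2/2 * ipd [1,1] (pd 2 \<phi>) (t,x,0)
    = \<tau>' t * (lam - k^2/(2*\<sigma>^2)) * x^2 * ln x + (2*lam - k^2/\<sigma>^2) * (\<xi>\<^sub>1 t + \<tau>' t/2) * x^2
     + \<alpha>*k^2*\<tau>' t/(2*\<sigma>^2) * x * ln x + k^2*\<alpha>*(\<xi>\<^sub>1 t + \<tau>' t)/\<sigma>^2 * x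
     + \<tau>''' t/(4*\<sigma>^2) * (ln x)^2 + (\<tau>'' t/4 - k*\<alpha>*\<tau>'' t/(2*\<sigma>^2) - \<gamma>'/\<sigma>^2) * ln x
     + (k*\<alpha>*\<gamma>/\<sigma>^2 - \<tau>'' t/4 - \<gamma>/2 - K)" (is "_ = ?P")
    unfolding xi_explicit[OF x] phi_ut_explicit[OF x] phi_ux_explicit[OF x] phi_uxx_explicit[OF x]
      phi_u_prim_def \<gamma>_def \<gamma>'_def K_def
    using x sigma_pos by (simp add: field_simps power2_eq_square)
  with phi_u_solves[OF x, of t] show "?P = 0" by simp
qed

end

section \<open>Classification\<close>

locale nondegenerate_smooth_inf_symmetry = smooth_inf_symmetry +
  assumes k_pos: "0 < k" and nondegenerate: "\<alpha> \<noteq> 0 \<or> lam \<noteq> k^2 / (2 * \<sigma>^2)"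
begin

lemma tau'_xi1_eq_0: "\<tau>' t = 0" "\<xi>\<^sub>1 t = 0"
proof -
  obtain c5 c6 c7 where "\<And>x. 0 < x \<Longrightarrow>
     \<tau>' t * (lam - k^2/(2*\<sigma>^2)) * x^2 * ln x + (2*lam - k^2/\<sigma>^2) * (\<xi>\<^sub>1 t + \<tau>' t/2) * x^2
     + \<alpha>*k^2*\<tau>' t/(2*\<sigma>^2) * x * ln x + k^2*\<alpha>*(\<xi>\<^sub>1 t + \<tau>' t)/\<sigma>^2 * x
     + c5 * (ln x)^2 + c6 * ln x + c7 = 0"
    using phi_u_solves_log_poly by blast
  note coeffs = log_poly_eq_0_imp_leading_coeffs_0[OF this]
  show "\<tau>' t = 0" "\<xi>\<^sub>1 t = 0"
  proof (atomize(full), cases "\<alpha> = 0")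
    case True
    with nondegenerate have "lam - k^2/(2*\<sigma>^2) \<noteq> 0" "2*lam - k^2/\<sigma>^2 \<noteq> 0"
      using sigma_pos by (auto simp: field_simps)
    then show "\<tau>' t = 0 \<and> \<xi>\<^sub>1 t = 0" using coeffs(1,2) by simp
  next
    case False
    then show "\<tau>' t = 0 \<and> \<xi>\<^sub>1 t = 0" using coeffs(3,4) sigma_pos k_pos by simp
  qed
qed

lemma xi_eq_0:
  assumes "0 < x"
  shows "\<xi> (t,x,u) = 0"
  using xi_eq[OF assms] xi_explicit[OF assms] tau'_xi1_eq_0 by simp

lemma tau_eq_const:
  assumes "0 < x"
  shows "\<tau> (t,x,u) = \<tau> (0,1,0)"
proof -
  have "\<tau> (t,1,0) = \<tau> (0,1,0)"
  proof (rule DERIV_isconst_all[where f = "\<lambda>s. \<tau> (s,1,0)", rule_format])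
    fix s :: real
    show "((\<lambda>s. \<tau> (s,1,0)) has_real_derivative 0) (at s)"
      using smooth_on_has_pd_t[OF smooth_tau, where x = 1 and ds = "[]" and t = s and u = 0]
        tau'_xi1_eq_0(1)[of s]
      by (simp add: \<tau>'_def)
  qed
  then show ?thesis using tau_eq[OF assms] by simp
qed

lemma phi_u_derivs_eq_0:
  assumes "0 < x"
  shows "pd 1 (pd 2 \<phi>) (t,x,0) = 0" "pd 0 (pd 2 \<phi>) (t,x,0) = 0"
proof -
  have "\<tau>' = (\<lambda>_. 0)" "\<xi>\<^sub>1 = (\<lambda>_. 0)"
    using tau'_xi1_eq_0 by auto
  then have "\<tau>'' t = 0" "\<xi>\<^sub>1' t = 0"
    using DERIV_coeffs(1,3)[of t] by (auto intro: DERIV_unique)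
  then show x_deriv: "pd 1 (pd 2 \<phi>) (t,x,0) = 0"
    using phi_ux_explicit[OF assms] tau'_xi1_eq_0 by simp
  have "ipd [1,1] (pd 2 \<phi>) (t,x,0) = 0"
    using phi_uxx_explicit[OF assms] tau'_xi1_eq_0 \<open>\<tau>'' t = 0\<close> \<open>\<xi>\<^sub>1' t = 0\<close> by simp
  then show "pd 0 (pd 2 \<phi>) (t,x,0) = 0"
    using phi_u_solves[OF assms, of t] x_deriv xi_eq_0[OF assms] tau'_xi1_eq_0 by simp
qed

lemma phi_u_eq_const:
  assumes "0 < x"
  shows "pd 2 \<phi> (t,x,0) = pd 2 \<phi> (0,1,0)"
proof -
  have "pd 2 \<phi> (t,x,0) = pd 2 \<phi> (t,1,0)"
  proof (rule DERIV_zero_on_pos_imp_const[where F = "\<lambda>y. pd 2 \<phi> (t,y,0)"])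
    fix y :: real assume "0 < y"
    then show "((\<lambda>y. pd 2 \<phi> (t,y,0)) has_real_derivative 0) (at y)"
      using smooth_on_has_pd_x[OF smooth_phi, where ds = "[2]" and t = t and u = 0]
        phi_u_derivs_eq_0(1)
      by simp
  qed (use assms in auto)
  also have "\<dots> = pd 2 \<phi> (0,1,0)"
  proof (rule DERIV_isconst_all[where f = "\<lambda>s. pd 2 \<phi> (s,1,0)", rule_format])
    fix s :: real
    show "((\<lambda>s. pd 2 \<phi> (s,1,0)) has_real_derivative 0) (at s)"
      using smooth_on_has_pd_t[OF smooth_phi, where x = 1 and ds = "[2]" and t = s and u = 0]
        phi_u_derivs_eq_0(2)[of 1 s]
      by simp
  qed
  finally show ?thesis .
qed

lemma inf_symmetry_classified:
  "\<exists>c1 c6 :: real. \<exists>w. is_solution \<sigma> k \<alpha> lam w \<and>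
     (\<forall>t x u. x > 0 \<longrightarrow> \<tau> (t,x,u) = c1 \<and> \<xi> (t,x,u) = 0 \<and> \<phi> (t,x,u) = c6 * u + w t x)"
proof -
  have "\<tau> (t,x,u) = \<tau> (0,1,0) \<and> \<xi> (t,x,u) = 0 \<and> \<phi> (t,x,u) = pd 2 \<phi> (0,1,0) * u + \<phi> (t,x,0)"
    if "0 < x" for t x u
    using tau_eq_const[OF that] xi_eq_0[OF that] phi_affine[OF that, of t u]
      phi_u_eq_const[OF that, of t]
    by simp
  with phi_0_is_solution show ?thesis by blast
qed

end

lemma pds_affine_in_u:
  assumes "smooth_on Dom W" and W_eq: "\<And>t x u. W (t,x,u) = w t x"
    and \<phi>_eq: "\<forall>t x u. 0 < x \<longrightarrow> \<phi> (t,x,u) = c * u + w t x" and x: "0 < x"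
  shows "pd 0 \<phi> (t,x,u) = pd 0 W (t,x,u)" "pd 1 \<phi> (t,x,u) = pd 1 W (t,x,u)"
    "ipd [1,1] \<phi> (t,x,u) = ipd [1,1] W (t,x,u)" "pd 2 \<phi> (t,x,u) = c" "pd i (pd 2 \<phi>) (t,x,u) = 0"
proof -
  have \<phi>_Dom: "\<forall>q\<in>Dom. \<phi> q = c * coord 2 q + W q"
    by (intro ball_DomI) (simp add: \<phi>_eq W_eq)
  have pd_x: "pd 1 \<phi> (r,y,u) = pd 1 W (r,y,u)" if y: "0 < y" for r y u
  proof -
    have "((\<lambda>s. c * u + W (r,s,u)) has_real_derivative pd 1 W (r,y,u)) (at y)"
      using smooth_on_has_pd_x[OF assms(1) y, where ds = "[]"] by (auto intro!: derivative_eq_intros)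
    then have "((\<lambda>s. \<phi> (r,s,u)) has_real_derivative pd 1 W (r,y,u)) (at y)"
      by (rule has_field_derivative_transform_within_open[where S = "{0<..}"])
        (use y \<phi>_Dom in auto)
    then show ?thesis by (simp add: pd_def DERIV_imp_deriv)
  qed
  then show "pd 1 \<phi> (t,x,u) = pd 1 W (t,x,u)" using x .
  have "\<forall>q\<in>Dom. pd 1 \<phi> q = pd 1 W q" by (intro ball_DomI pd_x)
  then show "ipd [1,1] \<phi> (t,x,u) = ipd [1,1] W (t,x,u)" using x by (simp add: pd_cong_Dom)
  have "(\<lambda>s. \<phi> (s,x,u)) = (\<lambda>s. c * u + W (s,x,u))" using \<phi>_Dom x by auto
  moreover have "((\<lambda>s. c * u + W (s,x,u)) has_real_derivative pd 0 W (t,x,u)) (at t)"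
    using smooth_on_has_pd_t[OF assms(1) x, where ds = "[]"] by (auto intro!: derivative_eq_intros)
  ultimately show "pd 0 \<phi> (t,x,u) = pd 0 W (t,x,u)" by (simp add: pd_def DERIV_imp_deriv)
  have pd_u: "pd 2 \<phi> (r,y,v) = c" if "0 < y" for r y v
  proof -
    have "(\<lambda>s. \<phi> (r,y,s)) = (\<lambda>s. c * s + w r y)" using \<phi>_eq that by auto
    moreover have "((\<lambda>s. c * s + w r y) has_real_derivative c) (at v)"
      by (auto intro!: derivative_eq_intros)
    ultimately show ?thesis by (simp add: pd_def DERIV_imp_deriv)
  qed
  then show "pd 2 \<phi> (t,x,u) = c" using x .
  show "pd i (pd 2 \<phi>) (t,x,u) = 0"
    using pd_eq_0_if_const_on_Dom[of "pd 2 \<phi>" c "(t,x,u)" i] pd_u x by (auto simp: Dom_def)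
qed

lemma trivial_is_inf_symmetry:
  assumes "is_solution \<sigma> k \<alpha> lam w"
    and H: "\<forall>t x u. 0 < x \<longrightarrow> \<tau> (t,x,u) = c1 \<and> \<xi> (t,x,u) = 0 \<and> \<phi> (t,x,u) = c6 * u + w t x"
  shows "is_inf_symmetry \<sigma> k \<alpha> lam \<tau> \<xi> \<phi>"
  unfolding is_inf_symmetry_def
proof (intro allI impI)
  define W where "W = (\<lambda>(t::real, x::real, u::real). w t x)"
  have smooth_W: "smooth_on Dom W"
    and W_solves: "\<And>t x u. 0 < x \<Longrightarrow>
      Delta \<sigma> k \<alpha> lam x (W (t,x,u)) (pd 0 W (t,x,u)) (pd 1 W (t,x,u)) (ipd [1,1] W (t,x,u)) = 0"
    using assms(1) unfolding is_solution_def Let_def W_def by auto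
  have W_eq: "W (t,x,u) = w t x" for t x u by (simp add: W_def)
  have "\<forall>t x u. 0 < x \<longrightarrow> \<phi> (t,x,u) = c6 * u + w t x" using H by simp
  note pds_\<phi> = pds_affine_in_u[OF smooth_W W_eq this]
  have "\<forall>q\<in>Dom. \<tau> q = c1" "\<forall>q\<in>Dom. \<xi> q = 0" using H by (auto intro!: ball_DomI)
  then have pds_Dom: "\<forall>q\<in>Dom. pd i \<tau> q = 0" "\<forall>q\<in>Dom. pd i \<xi> q = 0" for i
    using pd_eq_0_if_const_on_Dom by blast+
  have pds_\<tau>_\<xi>: "pd i \<tau> q = 0" "pd i \<xi> q = 0" "pd j (pd i \<tau>) q = 0" "pd j (pd i \<xi>) q = 0"
    if "q \<in> Dom" for i j q
    using that pds_Dom pd_eq_0_if_const_on_Dom[OF pds_Dom(1)] pd_eq_0_if_const_on_Dom[OF pds_Dom(2)]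
    by blast+
  fix t x u ut ux uxx uxt :: real
  assume x: "0 < x" and D: "Delta \<sigma> k \<alpha> lam x u ut ux uxx = 0"
  have "prV_Delta \<sigma> k \<alpha> lam \<tau> \<xi> \<phi> (t,x,u) ut ux uxx uxt = c6 * Delta \<sigma> k \<alpha> lam x u ut ux uxx
      + Delta \<sigma> k \<alpha> lam x (W (t,x,u)) (pd 0 W (t,x,u)) (pd 1 W (t,x,u)) (ipd [1,1] W (t,x,u))"
    using H x W_eq pds_\<phi>[OF x] pds_\<tau>_\<xi>[where q = "(t,x,u)"]
    by (simp add: prV_Delta_def phi_t_def phi_x_def phi_xx_def Delta_def algebra_simps)
  then show "prV_Delta \<sigma> k \<alpha> lam \<tau> \<xi> \<phi> (t,x,u) ut ux uxx uxt = 0"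
    using D W_solves[OF x] by simp
qed

theorem proposition2p2:
  fixes \<sigma> k \<alpha> lam :: real
  assumes "\<sigma> > 0" and "k > 0" and "\<alpha> \<ge> 0"
    and "\<alpha> \<noteq> 0 \<or> lam \<noteq> k^2 / (2 * \<sigma>^2)"
  shows "\<forall>\<tau> \<xi> \<phi> :: pt \<Rightarrow> real.
           smooth_on Dom \<tau> \<and> smooth_on Dom \<xi> \<and> smooth_on Dom \<phi> \<longrightarrow>
           (is_inf_symmetry \<sigma> k \<alpha> lam \<tau> \<xi> \<phi> \<longleftrightarrow>
             (\<exists>c1 c6 :: real. \<exists>w. is_solution \<sigma> k \<alpha> lam w \<and>
                (\<forall>t x u. x > 0 \<longrightarrow>
                   \<tau> (t, x, u) = c1 \<and> \<xi> (t, x, u) = 0 \<and> \<phi> (t, x, u) = c6 * u + w t x)))"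
proof (intro allI impI iffI)
  fix \<tau> \<xi> \<phi> :: "pt \<Rightarrow> real"
  assume "smooth_on Dom \<tau> \<and> smooth_on Dom \<xi> \<and> smooth_on Dom \<phi>"
    and "is_inf_symmetry \<sigma> k \<alpha> lam \<tau> \<xi> \<phi>"
  then interpret nondegenerate_smooth_inf_symmetry \<sigma> k \<alpha> lam \<tau> \<xi> \<phi>
    using assms by unfold_locales auto
  show "\<exists>c1 c6 :: real. \<exists>w. is_solution \<sigma> k \<alpha> lam w \<and>
     (\<forall>t x u. x > 0 \<longrightarrow> \<tau> (t,x,u) = c1 \<and> \<xi> (t,x,u) = 0 \<and> \<phi> (t,x,u) = c6 * u + w t x)"
    by (rule inf_symmetry_classified)
next
  fix \<tau> \<xi> \<phi> :: "pt \<Rightarrow> real"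
  assume "\<exists>c1 c6 :: real. \<exists>w. is_solution \<sigma> k \<alpha> lam w \<and>
     (\<forall>t x u. x > 0 \<longrightarrow> \<tau> (t,x,u) = c1 \<and> \<xi> (t,x,u) = 0 \<and> \<phi> (t,x,u) = c6 * u + w t x)"
  then show "is_inf_symmetry \<sigma> k \<alpha> lam \<tau> \<xi> \<phi>"
    by (auto intro: trivial_is_inf_symmetry)
qed

end
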